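(* A sequent $\Gamma\Rightarrow\Delta$ (of formulas of $\mathcal{L}^\Box$) is derivable in $\mathsf{S.ConstCK}^\Box$ if and only if $\iota(\Gamma\Rightarrow\Delta)$ is derivable in $\mathsf{ConstCK}^\Box$.
   Context: Language $\mathcal{L}^\Box$: formulas $\varphi ::= p \mid \bot \mid \varphi\wedge\varphi \mid \varphi\vee\varphi \mid \varphi\to\varphi \mid \varphi \mathrel{\Box\!\!\to} \varphi$; $\neg\varphi:=\varphi\to\bot$, $\top:=\neg\bot$, $\varphi\leftrightarrow\psi:=(\varphi\to\psi)\wedge(\psi\to\varphi)$. $\mathsf{ConstCK}^\Box$: any axiomatisation of intuitionistic propositional logic in $\mathcal{L}^\Box$ with modus ponens, plus RA$_\Box$: from $\varphi\leftrightarrow\rho$ infer $(\varphi\mathrel{\Box\!\!\to}\psi)\leftrightarrow(\rho\mathrel{\Box\!\!\to}\psi)$; RC$_\Box$: from $\psi\leftrightarrow\chi$ infer $(\varphi\mathrel{\Box\!\!\to}\psi)\leftrightarrow(\varphi\mathrel{\Box\!\!\to}\chi)$; CM$_\Box$: $(\varphi\mathrel{\Box\!\!\to}\psi\wedge\chi)\to(\varphi\mathrel{\Box\!\!\to}\psi)\wedge(\varphi\mathrel{\Box\!\!\to}\chi)$; CC$_\Box$: $(\varphi\mathrel{\Box\!\!\to}\psi)\wedge(\varphi\mathrel{\Box\!\!\to}\chi)\to(\varphi\mathrel{\Box\!\!\to}\psi\wedge\chi)$; CN$_\Box$: $\varphi\mathrel{\Box\!\!\to}\top$. A sequent $\Gamma\Rightarrow\Delta$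 is a pair of finite multisets of formulas with $|\Delta|\le1$; $\varphi\Leftrightarrow\rho$ abbreviates $\varphi\Rightarrow\rho$ and $\rho\Rightarrow\varphi$. $\iota(\Gamma\Rightarrow\Delta)=\bigwedge\Gamma\to\bigvee\Delta$ if $\Gamma\ne\emptyset$, $\bigvee\Delta$ otherwise, with $\bigvee\emptyset=\bot$. Rules of $\mathsf{S.ConstCK}^\Box$ (premisses / conclusion, $0\le|\Delta|\le1$, $n\ge0$): init: $\Gamma,p\Rightarrow p$; $\bot_L$: $\Gamma,\bot\Rightarrow\Delta$; $\wedge_L$: $\Gamma,\varphi,\psi\Rightarrow\Delta$ / $\Gamma,\varphi\wedge\psi\Rightarrow\Delta$; $\wedge_R$: $\Gamma\Rightarrow\varphi$, $\Gamma\Rightarrow\psi$ / $\Gamma\Rightarrow\varphi\wedge\psi$; $\vee_L$: $\Gamma,\varphi\Rightarrow\Delta$, $\Gamma,\psi\Rightarrow\Delta$ / $\Gamma,\varphi\vee\psi\Rightarrow\Delta$; $\vee_R^1$: $\Gamma\Rightarrow\varphi$ / $\Gamma\Rightarrow\varphi\vee\psi$; $\vee_R^2$: $\Gamma\Rightarrow\psi$ / $\Gamma\Rightarrow\varphi\vee\psi$; $\to_R$: $\Gamma,\varphi\Rightarrow\psi$ / $\Gamma\Rightarrow\varphi\to\psi$; $\to_L$: $\Gamma,\varphi\to\psi\Rightarrow\varphi$, $\Gamma,\psi\Rightarrow\Delta$ / $\Gamma,\varphi\to\psi\Rightarrow\Delta$; $\Box$: $\{\varphi\Leftrightarrow\rho_i\}_{i\le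 n}$, $\sigma_1,\dots,\sigma_n\Rightarrow\psi$ / $\Gamma,\rho_1\mathrel{\Box\!\!\to}\sigma_1,\dots,\rho_n\mathrel{\Box\!\!\to}\sigma_n\Rightarrow\varphi\mathrel{\Box\!\!\to}\psi$. *)

theory Defs
  imports Main "HOL-Library.Multiset"
begin

datatype 'a fm =
    Atom 'a
  | Bot
  | Conj "'a fm" "'a fm"
  | Disj "'a fm" "'a fm"
  | Imp "'a fm" "'a fm"
  | Box "'a fm" "'a fm"   (* \<phi> \<box>\<rightarrow> \<psi> *)

definition Neg :: "'a fm \<Rightarrow> 'a fm" where "Neg \<phi> = Imp \<phi> Bot"
definition Top :: "'a fm" where "Top = Neg Bot"
definition Iff :: "'a fm \<Rightarrow> 'a fm \<Rightarrow> 'a fm" where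
  "Iff \<phi> \<psi> = Conj (Imp \<phi> \<psi>) (Imp \<psi> \<phi>)"

inductive hil :: "'a fm \<Rightarrow> bool" where
  ax_K:   "hil (Imp A (Imp B A))"
| ax_S:   "hil (Imp (Imp A (Imp B C)) (Imp (Imp A B) (Imp A C)))"
| ax_C1:  "hil (Imp (Conj A B) A)"
| ax_C2:  "hil (Imp (Conj A B) B)"
| ax_C3:  "hil (Imp A (Imp B (Conj A B)))"
| ax_D1:  "hil (Imp A (Disj A B))"
| ax_D2:  "hil (Imp B (Disj A B))"
| ax_D3:  "hil (Imp (Imp A C) (Imp (Imp B C) (Imp (Disj A B) C)))"
| ax_EFQ: "hil (Imp Bot A)"
| MP:     "hil (Imp A B) \<Longrightarrow> hil A \<Longrightarrow> hil B"
| RA:     "hil (Iff \<phi> \<rho>) \<Longrightarrow> hil (Iff (Box \<phi> \<psi>) (Box \<rho> \<psi>))"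
| RC:     "hil (Iff \<psi> \<chi>) \<Longrightarrow> hil (Iff (Box \<phi> \<psi>) (Box \<phi> \<chi>))"
| CM:     "hil (Imp (Box \<phi> (Conj \<psi> \<chi>)) (Conj (Box \<phi> \<psi>) (Box \<phi> \<chi>)))"
| CC:     "hil (Imp (Conj (Box \<phi> \<psi>) (Box \<phi> \<chi>)) (Box \<phi> (Conj \<psi> \<chi>)))"
| CN:     "hil (Box \<phi> Top)"

inductive sd :: "'a fm multiset \<Rightarrow> 'a fm multiset \<Rightarrow> bool" where
  init:  "sd (add_mset (Atom p) \<Gamma>) {#Atom p#}"
| botL:  "size \<Delta> \<le> 1 \<Longrightarrow> sd (add_mset Bot \<Gamma>) \<Delta>"
| conjL: "size \<Delta> \<le> 1 \<Longrightarrow> sd (add_mset \<phi> (add_mset \<psi> \<Gamma>)) \<Delta> \<Longrightarrow> sd (add_mset (Conj \<phi> \<psi>) \<Gamma>) \<Delta>"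
| conjR: "sd \<Gamma> {#\<phi>#} \<Longrightarrow> sd \<Gamma> {#\<psi>#} \<Longrightarrow> sd \<Gamma> {#Conj \<phi> \<psi>#}"
| disjL: "size \<Delta> \<le> 1 \<Longrightarrow> sd (add_mset \<phi> \<Gamma>) \<Delta> \<Longrightarrow> sd (add_mset \<psi> \<Gamma>) \<Delta>
          \<Longrightarrow> sd (add_mset (Disj \<phi> \<psi>) \<Gamma>) \<Delta>"
| disjR1: "sd \<Gamma> {#\<phi>#} \<Longrightarrow> sd \<Gamma> {#Disj \<phi> \<psi>#}"
| disjR2: "sd \<Gamma> {#\<psi>#} \<Longrightarrow> sd \<Gamma> {#Disj \<phi> \<psi>#}"
| impR:  "sd (add_mset \<phi> \<Gamma>) {#\<psi>#} \<Longrightarrow> sd \<Gamma> {#Imp \<phi> \<psi>#}"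
| impL:  "size \<Delta> \<le> 1 \<Longrightarrow> sd (add_mset (Imp \<phi> \<psi>) \<Gamma>) {#\<phi>#} \<Longrightarrow> sd (add_mset \<psi> \<Gamma>) \<Delta>
          \<Longrightarrow> sd (add_mset (Imp \<phi> \<psi>) \<Gamma>) \<Delta>"
| box:   "(\<forall>(\<rho>, \<sigma>) \<in> set rs. sd {#\<phi>#} {#\<rho>#} \<and> sd {#\<rho>#} {#\<phi>#})
          \<Longrightarrow> sd (mset (map snd rs)) {#\<psi>#}
          \<Longrightarrow> sd (\<Gamma> + mset (map (\<lambda>(\<rho>, \<sigma>). Box \<rho> \<sigma>) rs)) {#Box \<phi> \<psi>#}"

fun bigConj :: "'a fm list \<Rightarrow> 'a fm" where
  "bigConj [] = Top"
| "bigConj [x] = x"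
| "bigConj (x # xs) = Conj x (bigConj xs)"

fun bigDisj :: "'a fm list \<Rightarrow> 'a fm" where
  "bigDisj [] = Bot"
| "bigDisj [x] = x"
| "bigDisj (x # xs) = Disj x (bigDisj xs)"

text \<open>Formula interpretation of a sequent; for a multiset we take (an arbitrary) enumeration.\<close>
definition iota :: "'a fm multiset \<Rightarrow> 'a fm multiset \<Rightarrow> 'a fm" where
  "iota \<Gamma> \<Delta> =
     (let D = bigDisj (SOME ds. mset ds = \<Delta>) in
      if \<Gamma> = {#} then D else Imp (bigConj (SOME gs. mset gs = \<Gamma>)) D)"

end

theory Submission
  imports Defs
begin

text \<open>Soundness: every rule of the sequent calculus is simulated by derivability from
  hypotheses in the Hilbert system. The deduction theorem handles implication, and the box
  rule combines RA (for the antecedents), CC and CN (to collect the consequents into one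
  conjunction) and monotonicity of the box in its consequent, which follows from RC
  applied to \<open>C \<leftrightarrow> C \<and> P\<close> and CM.

  Completeness: every Hilbert axiom has a cut-free derivation, and modus ponens is handled
  by cut. Cut is admissible by induction on the cut formula and, inside it, on the
  derivation of the premise containing the cut formula on the left. Principal cases use the
  invertibility of the right rules for conjunction and implication; for disjunction and box
  the right rule is not invertible, so one inducts on the other premise instead, and in the
  box case the boxes of the two box rules are merged into one.\<close>

inductive hil_from :: "'a fm set \<Rightarrow> 'a fm \<Rightarrow> bool" for G where
  from_hyp: "A \<in> G \<Longrightarrow> hil_from G A"
| from_hil: "hil A \<Longrightarrow> hil_from G A"
| from_mp: "hil_from G (Imp A B) \<Longrightarrow> hil_from G A \<Longrightarrow> hil_from G B"

lemma hil_imp_refl: "hil (Imp A A)"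
  using MP[OF MP[OF ax_S ax_K] ax_K[where B = A]] .

lemma hil_from_deduction: "hil_from (insert A G) B \<Longrightarrow> hil_from G (Imp A B)"
proof (induction rule: hil_from.induct)
  case (from_hyp C)
  then consider "C = A" | "C \<in> G" by blast
  then show ?case
    by cases (auto intro: hil_from.intros hil_imp_refl ax_K)
next
  case (from_hil C)
  then show ?case by (auto intro: hil_from.intros ax_K)
next
  case (from_mp C D)
  then show ?case by (meson hil_from.intros ax_S)
qed

lemma hil_from_empty_iff: "hil_from {} A \<longleftrightarrow> hil A"
proof
  show "hil_from {} A \<Longrightarrow> hil A"
    by (induction rule: hil_from.induct) (auto intro: MP)
qed (rule from_hil)

lemma hil_from_trans: "hil_from G A \<Longrightarrow> (\<And>x. x \<in> G \<Longrightarrow> hil_from H x) \<Longrightarrow> hil_from H A"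
  by (induction rule: hil_from.induct) (auto intro: hil_from.intros)

lemma hil_from_mono: "hil_from G A \<Longrightarrow> G \<subseteq> H \<Longrightarrow> hil_from H A"
  by (erule hil_from_trans) (auto intro: from_hyp)

lemma hil_from_cut: "hil_from G A \<Longrightarrow> hil_from (insert A G) B \<Longrightarrow> hil_from G B"
  using hil_from_deduction from_mp by blast

lemma hil_from_imp_iff: "hil (Imp A B) \<longleftrightarrow> hil_from {A} B"
proof
  assume "hil (Imp A B)"
  then show "hil_from {A} B" by (blast intro: hil_from.intros)
qed (simp add: hil_from_deduction flip: hil_from_empty_iff)

lemma hil_from_conjE1: "hil_from G (Conj A B) \<Longrightarrow> hil_from G A"
  by (rule from_mp[OF from_hil[OF ax_C1]])

lemma hil_from_conjE2: "hil_from G (Conj A B) \<Longrightarrow> hil_from G B"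
  by (rule from_mp[OF from_hil[OF ax_C2]])

lemma hil_from_conjI: "hil_from G A \<Longrightarrow> hil_from G B \<Longrightarrow> hil_from G (Conj A B)"
  by (rule from_mp[OF from_mp[OF from_hil[OF ax_C3]]])

lemma hil_from_disjI1: "hil_from G A \<Longrightarrow> hil_from G (Disj A B)"
  by (rule from_mp[OF from_hil[OF ax_D1]])

lemma hil_from_disjI2: "hil_from G B \<Longrightarrow> hil_from G (Disj A B)"
  by (rule from_mp[OF from_hil[OF ax_D2]])

lemma hil_from_disjE:
  "hil_from G (Disj A B) \<Longrightarrow> hil_from (insert A G) C \<Longrightarrow> hil_from (insert B G) C \<Longrightarrow> hil_from G C"
  by (meson from_mp from_hil ax_D3 hil_from_deduction)

lemma hil_from_botE: "hil_from G Bot \<Longrightarrow> hil_from G C"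
  by (rule from_mp[OF from_hil[OF ax_EFQ]])

lemma hil_iffI: "hil_from {A} B \<Longrightarrow> hil_from {B} A \<Longrightarrow> hil (Iff A B)"
  unfolding Iff_def hil_from_empty_iff[symmetric]
  by (intro hil_from_conjI hil_from_deduction) (auto elim: hil_from_mono)

lemma hil_iffD1: "hil (Iff A B) \<Longrightarrow> hil (Imp A B)"
  unfolding Iff_def by (rule MP[OF ax_C1])

lemma hil_iffD2: "hil (Iff A B) \<Longrightarrow> hil (Imp B A)"
  unfolding Iff_def by (rule MP[OF ax_C2])

lemma hil_from_box_ant_cong:
  assumes "hil_from {\<phi>} \<rho>" and "hil_from {\<rho>} \<phi>" and "hil_from G (Box \<rho> \<psi>)"
  shows "hil_from G (Box \<phi> \<psi>)"
proof -
  have "hil (Imp (Box \<rho> \<psi>) (Box \<phi> \<psi>))"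
    using assms(1,2) by (intro hil_iffD2 RA hil_iffI)
  then show ?thesis using assms(3) by (blast intro: hil_from.intros)
qed

lemma hil_from_box_cons_mono:
  assumes "hil (Imp C P)" and "hil_from G (Box F C)"
  shows "hil_from G (Box F P)"
proof -
  have "hil_from {C} (Conj C P)"
    using assms(1) by (blast intro: hil_from.intros hil_from_conjI)
  moreover have "hil_from {Conj C P} C"
    by (blast intro: hil_from.intros hil_from_conjE1)
  ultimately have "hil (Imp (Box F C) (Box F (Conj C P)))"
    by (intro hil_iffD1 RC hil_iffI)
  then have "hil_from G (Conj (Box F C) (Box F P))"
    using assms(2) by (blast intro: hil_from.intros CM)
  then show ?thesis by (rule hil_from_conjE2)
qed

lemma hil_from_box_bigConj:
  "(\<And>s. s \<in> set ss \<Longrightarrow> hil_from G (Box F s)) \<Longrightarrow> hil_from G (Box F (bigConj ss))"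
proof (induction ss rule: bigConj.induct)
  case (3 x y ys)
  then have "hil_from G (Conj (Box F x) (Box F (bigConj (y # ys))))"
    by (simp add: hil_from_conjI)
  then show ?case by (auto intro: from_mp from_hil CC)
qed (auto intro: from_hil CN)

lemma hil_from_bigConj_elim: "x \<in> set xs \<Longrightarrow> hil_from {bigConj xs} x"
proof (induction xs rule: bigConj.induct)
  case (3 y z zs)
  have conj: "hil_from {bigConj (y # z # zs)} (Conj y (bigConj (z # zs)))"
    by (simp add: from_hyp)
  show ?case
  proof (cases "x = y")
    case False
    with 3 have "hil_from {bigConj (z # zs)} x" by simp
    then show ?thesis
      by (rule hil_from_trans) (use hil_from_conjE2[OF conj] in simp)
  qed (use hil_from_conjE1[OF conj] in simp)
qed (auto intro: from_hyp)

lemma hil_from_bigConj_intro: "xs \<noteq> [] \<Longrightarrow> hil_from (set xs) (bigConj xs)"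
  by (induction xs rule: bigConj.induct) (auto intro: from_hyp hil_from_conjI elim: hil_from_mono)

lemma hil_from_box_entailed:
  assumes "\<And>s. s \<in> set ss \<Longrightarrow> hil_from G (Box F s)" and "hil_from (set ss) P"
  shows "hil_from G (Box F P)"
proof -
  have "hil_from {bigConj ss} P"
    using assms(2) by (rule hil_from_trans) (rule hil_from_bigConj_elim)
  then have "hil (Imp (bigConj ss) P)"
    by (simp add: hil_from_imp_iff)
  then show ?thesis
    using assms(1) by (blast intro: hil_from_box_cons_mono[OF _ hil_from_box_bigConj])
qed

definition conj_mset :: "'a fm multiset \<Rightarrow> 'a fm" where
  "conj_mset \<Gamma> = bigConj (SOME gs. mset gs = \<Gamma>)"

definition disj_mset :: "'a fm multiset \<Rightarrow> 'a fm" where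
  "disj_mset \<Delta> = bigDisj (SOME ds. mset ds = \<Delta>)"

lemma iota_conj_disj:
  "iota \<Gamma> \<Delta> = (if \<Gamma> = {#} then disj_mset \<Delta> else Imp (conj_mset \<Gamma>) (disj_mset \<Delta>))"
  unfolding iota_def conj_mset_def disj_mset_def Let_def ..

lemma disj_mset_empty [simp]: "disj_mset {#} = Bot"
  by (simp add: disj_mset_def)

lemma disj_mset_single [simp]: "disj_mset {#A#} = A"
proof -
  have "mset ds = {#A#} \<longleftrightarrow> ds = [A]" for ds :: "'a fm list"
    by (cases ds) auto
  then show ?thesis by (simp add: disj_mset_def)
qed

lemma hil_from_conj_mset_elim: "A \<in># \<Gamma> \<Longrightarrow> hil_from {conj_mset \<Gamma>} A"
  unfolding conj_mset_def
  by (rule hil_from_bigConj_elim) (metis (mono_tags) ex_mset set_mset_mset someI_ex)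

lemma hil_from_conj_mset_intro: "\<Gamma> \<noteq> {#} \<Longrightarrow> hil_from (set_mset \<Gamma>) (conj_mset \<Gamma>)"
  unfolding conj_mset_def
  by (metis (mono_tags) hil_from_bigConj_intro ex_mset mset.simps(1) set_mset_mset someI_ex)

lemma hil_iota_iff: "hil (iota \<Gamma> \<Delta>) \<longleftrightarrow> hil_from (set_mset \<Gamma>) (disj_mset \<Delta>)"
proof (cases "\<Gamma> = {#}")
  case False
  have "hil_from {conj_mset \<Gamma>} (disj_mset \<Delta>) \<longleftrightarrow> hil_from (set_mset \<Gamma>) (disj_mset \<Delta>)"
  proof
    assume "hil_from {conj_mset \<Gamma>} (disj_mset \<Delta>)"
    then show "hil_from (set_mset \<Gamma>) (disj_mset \<Delta>)"
      by (rule hil_from_trans) (use False hil_from_conj_mset_intro in simp)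
  next
    assume "hil_from (set_mset \<Gamma>) (disj_mset \<Delta>)"
    then show "hil_from {conj_mset \<Gamma>} (disj_mset \<Delta>)"
      by (rule hil_from_trans) (simp add: hil_from_conj_mset_elim)
  qed
  with False show ?thesis
    by (simp add: iota_conj_disj hil_from_imp_iff)
qed (simp add: iota_conj_disj hil_from_empty_iff)

abbreviation boxes :: "('a fm \<times> 'a fm) list \<Rightarrow> 'a fm multiset" where
  "boxes rs \<equiv> mset (map (\<lambda>(\<rho>, \<sigma>). Box \<rho> \<sigma>) rs)"

abbreviation sd_equiv :: "'a fm \<Rightarrow> 'a fm \<Rightarrow> bool" where
  "sd_equiv \<phi> \<rho> \<equiv> sd {#\<phi>#} {#\<rho>#} \<and> sd {#\<rho>#} {#\<phi>#}"

theorem sd_sound: "sd \<Gamma> \<Delta> \<Longrightarrow> hil_from (set_mset \<Gamma>) (disj_mset \<Delta>)"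
proof (induction rule: sd.induct)
  case (init p \<Gamma>)
  then show ?case by (simp add: from_hyp)
next
  case (botL \<Delta> \<Gamma>)
  then show ?case by (simp add: from_hyp hil_from_botE)
next
  case (conjL \<Delta> \<phi> \<psi> \<Gamma>)
  let ?H = "insert (Conj \<phi> \<psi>) (set_mset \<Gamma>)"
  have conj: "hil_from ?H (Conj \<phi> \<psi>)"
    by (simp add: from_hyp)
  have "hil_from (insert \<phi> (insert \<psi> ?H)) (disj_mset \<Delta>)"
    using conjL.IH by (rule hil_from_mono) auto
  then have "hil_from (insert \<psi> ?H) (disj_mset \<Delta>)"
    using hil_from_conjE1[OF conj] by (blast intro: hil_from_cut hil_from_mono)
  then show ?case
    using hil_from_cut[OF hil_from_conjE2[OF conj]] by simp
next
  case (conjR \<Gamma> \<phi> \<psi>)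
  then show ?case by (simp add: hil_from_conjI)
next
  case (disjL \<Delta> \<phi> \<Gamma> \<psi>)
  let ?H = "insert (Disj \<phi> \<psi>) (set_mset \<Gamma>)"
  have "hil_from (insert \<phi> ?H) (disj_mset \<Delta>)"
    using disjL.IH(1) by (rule hil_from_mono) auto
  moreover have "hil_from (insert \<psi> ?H) (disj_mset \<Delta>)"
    using disjL.IH(2) by (rule hil_from_mono) auto
  ultimately show ?case
    using hil_from_disjE[OF from_hyp[OF insertI1]] by simp
next
  case (disjR1 \<Gamma> \<phi> \<psi>)
  then show ?case by (simp add: hil_from_disjI1)
next
  case (disjR2 \<Gamma> \<psi> \<phi>)
  then show ?case by (simp add: hil_from_disjI2)
next
  case (impR \<phi> \<Gamma> \<psi>)
  then show ?case by (simp add: hil_from_deduction)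
next
  case (impL \<Delta> \<phi> \<psi> \<Gamma>)
  let ?H = "insert (Imp \<phi> \<psi>) (set_mset \<Gamma>)"
  have "hil_from ?H \<psi>"
    using impL.IH(1) by (auto intro: from_mp from_hyp)
  moreover have "hil_from (insert \<psi> ?H) (disj_mset \<Delta>)"
    using impL.IH(2) by (rule hil_from_mono) auto
  ultimately show ?case
    by (simp add: hil_from_cut)
next
  case (box rs \<phi> \<psi> \<Gamma>)
  let ?H = "set_mset (\<Gamma> + boxes rs)"
  have "hil_from ?H (Box \<phi> \<sigma>)" if "(\<rho>, \<sigma>) \<in> set rs" for \<rho> \<sigma>
  proof (rule hil_from_box_ant_cong)
    show "hil_from {\<phi>} \<rho>" "hil_from {\<rho>} \<phi>"
      using box.IH(1) that by auto
    show "hil_from ?H (Box \<rho> \<sigma>)"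
      using that by (force intro: from_hyp)
  qed
  then have "hil_from ?H (Box \<phi> \<sigma>)" if "\<sigma> \<in> set (map snd rs)" for \<sigma>
    using that by auto
  then show ?case
    using hil_from_box_entailed[of "map snd rs"] box.IH(2) by simp
qed

lemma sd_succ_size: "sd \<Gamma> \<Delta> \<Longrightarrow> size \<Delta> \<le> 1"
  by (induction rule: sd.induct) auto

lemma sd_boxI:
  assumes "boxes rs \<subseteq># \<Gamma>"
    and "\<forall>(\<rho>, \<sigma>) \<in> set rs. sd_equiv \<phi> \<rho>"
    and "sd (mset (map snd rs)) {#\<psi>#}"
  shows "sd \<Gamma> {#Box \<phi> \<psi>#}"
  using sd.box[OF assms(2,3), of "\<Gamma> - boxes rs"] assms(1) by (simp add: subset_mset.diff_add)

lemma sd_weaken: "sd \<Gamma> \<Delta> \<Longrightarrow> sd (\<Gamma> + \<Theta>) \<Delta>"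
proof (induction rule: sd.induct)
  case (box rs \<phi> \<psi> \<Gamma>)
  then show ?case by (intro sd_boxI[of rs]) auto
qed (auto intro: sd.intros)

lemma sd_mono: "sd \<Gamma> \<Delta> \<Longrightarrow> \<Gamma> \<subseteq># \<Gamma>' \<Longrightarrow> sd \<Gamma>' \<Delta>"
  by (metis mset_subset_eq_exists_conv sd_weaken)

lemma sd_refl: "sd (add_mset A \<Gamma>) {#A#}"
proof (induction A arbitrary: \<Gamma>)
  case (Conj A B)
  have "sd (add_mset A (add_mset B \<Gamma>)) {#A#}" "sd (add_mset B (add_mset A \<Gamma>)) {#B#}"
    by (fact Conj.IH)+
  then show ?case by (auto intro: sd.conjL sd.conjR simp: add_mset_commute)
next
  case (Imp A B)
  have "sd (add_mset (Imp A B) (add_mset A \<Gamma>)) {#B#}"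
  proof (rule sd.impL)
    show "sd (add_mset (Imp A B) (add_mset A \<Gamma>)) {#A#}"
      using Imp.IH(1)[of "add_mset (Imp A B) \<Gamma>"] by (simp add: add_mset_commute)
  qed (simp_all add: Imp.IH(2))
  then show ?case by (intro sd.impR) (simp add: add_mset_commute)
next
  case (Disj A B)
  show ?case by (rule sd.disjL) (simp_all add: sd.disjR1 sd.disjR2 Disj.IH)
next
  case (Box A B)
  show ?case by (rule sd_boxI[of "[(A, B)]"]) (use Box.IH[of "{#}"] in auto)
qed (auto intro: sd.intros)

lemma sd_assm: "A \<in># \<Gamma> \<Longrightarrow> sd \<Gamma> {#A#}"
  by (metis sd_refl multi_member_split)

lemma sd_conjR_inv: "sd \<Gamma> {#Conj X Y#} \<Longrightarrow> sd \<Gamma> {#X#} \<and> sd \<Gamma> {#Y#}"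
proof (induction \<Gamma> "{#Conj X Y#}" rule: sd.induct)
  case (impL \<phi> \<psi> \<Gamma>)
  then show ?case using sd.impL[of "{#X#}" \<phi> \<psi> \<Gamma>] sd.impL[of "{#Y#}" \<phi> \<psi> \<Gamma>] by simp
qed (auto intro: sd.botL sd.conjL sd.disjL)

lemma sd_impR_inv: "sd \<Gamma> {#Imp X Y#} \<Longrightarrow> sd (add_mset X \<Gamma>) {#Y#}"
proof (induction \<Gamma> "{#Imp X Y#}" rule: sd.induct)
  case (botL \<Gamma>)
  show ?case using sd.botL[of "{#Y#}" "add_mset X \<Gamma>"] by (simp add: add_mset_commute)
next
  case (conjL \<phi> \<psi> \<Gamma>)
  then have "sd (add_mset (Conj \<phi> \<psi>) (add_mset X \<Gamma>)) {#Y#}"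
    by (intro sd.conjL) (simp_all add: add_mset_commute)
  then show ?case by (simp add: add_mset_commute)
next
  case (disjL \<phi> \<Gamma> \<psi>)
  then have "sd (add_mset (Disj \<phi> \<psi>) (add_mset X \<Gamma>)) {#Y#}"
    by (intro sd.disjL) (simp_all add: add_mset_commute)
  then show ?case by (simp add: add_mset_commute)
next
  case (impL \<phi> \<psi> \<Gamma>)
  have "sd (add_mset (Imp \<phi> \<psi>) (add_mset X \<Gamma>)) {#Y#}"
  proof (rule sd.impL)
    show "sd (add_mset (Imp \<phi> \<psi>) (add_mset X \<Gamma>)) {#\<phi>#}"
      using sd_weaken[OF impL.hyps(2), of "{#X#}"] by (simp add: add_mset_commute)
    show "sd (add_mset \<psi> (add_mset X \<Gamma>)) {#Y#}"
      using impL.hyps(5) by (simp add: add_mset_commute)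
  qed simp
  then show ?case by (simp add: add_mset_commute)
qed simp_all

lemma sd_botR_inv: "sd \<Gamma> D \<Longrightarrow> D = {#Bot#} \<Longrightarrow> size \<Delta> \<le> 1 \<Longrightarrow> sd \<Gamma> \<Delta>"
  by (induction rule: sd.induct) (auto intro: sd.botL sd.conjL sd.disjL sd.impL)

lemma add_mset_eq_add_msetD:
  "add_mset a M = add_mset b N \<Longrightarrow> a \<noteq> b \<Longrightarrow> \<exists>K. M = add_mset b K \<and> N = add_mset a K"
  by (auto simp: add_eq_conv_ex)

text \<open>Invertibility of the left rules, uniformly: \<open>F\<close> may be replaced by \<open>N\<close> as soon as
  this is possible when \<open>F\<close> is principal.\<close>
lemma sd_left_inv:
  assumes "sd (add_mset F \<Gamma>) \<Delta>"
    and "\<And>p. F \<noteq> Atom p" and "F \<noteq> Bot" and "\<And>\<rho> \<sigma>. F \<noteq> Box \<rho> \<sigma>"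
    and conj: "\<And>\<phi> \<psi> \<Gamma> \<Delta>. F = Conj \<phi> \<psi> \<Longrightarrow> size \<Delta> \<le> 1 \<Longrightarrow>
      sd (add_mset \<phi> (add_mset \<psi> \<Gamma>)) \<Delta> \<Longrightarrow> sd (N + \<Gamma>) \<Delta>"
    and disj: "\<And>\<phi> \<psi> \<Gamma> \<Delta>. F = Disj \<phi> \<psi> \<Longrightarrow> size \<Delta> \<le> 1 \<Longrightarrow>
      sd (add_mset \<phi> \<Gamma>) \<Delta> \<Longrightarrow> sd (add_mset \<psi> \<Gamma>) \<Delta> \<Longrightarrow> sd (N + \<Gamma>) \<Delta>"
    and imp: "\<And>\<phi> \<psi> \<Gamma> \<Delta>. F = Imp \<phi> \<psi> \<Longrightarrow> size \<Delta> \<le> 1 \<Longrightarrow>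
      sd (add_mset (Imp \<phi> \<psi>) \<Gamma>) {#\<phi>#} \<Longrightarrow> sd (add_mset \<psi> \<Gamma>) \<Delta> \<Longrightarrow> sd (N + \<Gamma>) \<Delta>"
  shows "sd (N + \<Gamma>) \<Delta>"
  using assms(1)
proof (induction "add_mset F \<Gamma>" \<Delta> arbitrary: \<Gamma> rule: sd.induct)
  case (init p \<Gamma>')
  then obtain K where "\<Gamma> = add_mset (Atom p) K"
    using add_mset_eq_add_msetD[OF init.hyps] assms(2) by blast
  then show ?case by (simp add: sd.init)
next
  case (botL \<Delta> \<Gamma>')
  then obtain K where "\<Gamma> = add_mset Bot K"
    using add_mset_eq_add_msetD[OF botL.hyps(2)] assms(3) by blast
  then show ?case using botL.hyps(1) by (simp add: sd.botL)
next
  case (conjL \<Delta> \<phi> \<psi> \<Gamma>')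
  show ?case
  proof (cases "F = Conj \<phi> \<psi>")
    case True
    with conjL show ?thesis by (auto intro: conj)
  next
    case False
    then obtain K where K: "\<Gamma>' = add_mset F K" "\<Gamma> = add_mset (Conj \<phi> \<psi>) K"
      using add_mset_eq_add_msetD[OF conjL.hyps(4)] by blast
    have "sd (N + add_mset \<phi> (add_mset \<psi> K)) \<Delta>"
      using conjL.hyps(3) K(1) by (simp add: add_mset_commute)
    then show ?thesis using K(2) conjL.hyps(1) by (simp add: sd.conjL)
  qed
next
  case (disjL \<Delta> \<phi> \<Gamma>' \<psi>)
  show ?case
  proof (cases "F = Disj \<phi> \<psi>")
    case True
    with disjL show ?thesis by (auto intro: disj)
  next
    case False
    then obtain K where K: "\<Gamma>' = add_mset F K" "\<Gamma> = add_mset (Disj \<phi> \<psi>) K"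
      using add_mset_eq_add_msetD[OF disjL.hyps(6)] by blast
    have "sd (N + add_mset \<phi> K) \<Delta>" "sd (N + add_mset \<psi> K) \<Delta>"
      using disjL.hyps(3,5) K(1) by (simp_all add: add_mset_commute)
    then show ?thesis using K(2) disjL.hyps(1) by (simp add: sd.disjL)
  qed
next
  case (impL \<Delta> \<phi> \<psi> \<Gamma>')
  show ?case
  proof (cases "F = Imp \<phi> \<psi>")
    case True
    with impL show ?thesis by (auto intro: imp)
  next
    case False
    then obtain K where K: "\<Gamma>' = add_mset F K" "\<Gamma> = add_mset (Imp \<phi> \<psi>) K"
      using add_mset_eq_add_msetD[OF impL.hyps(6)] by blast
    have "sd (N + \<Gamma>) {#\<phi>#}" "sd (N + add_mset \<psi> K) \<Delta>"
      using impL.hyps(3,5) K by (simp_all add: add_mset_commute)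
    then show ?thesis using K(2) impL.hyps(1) by (simp add: sd.impL)
  qed
next
  case (box rs \<phi> \<psi> \<Gamma>')
  have "F \<in># \<Gamma>' + boxes rs" using box.hyps(4) by simp
  moreover have "F \<notin># boxes rs" using assms(4) by auto
  ultimately obtain K where "\<Gamma>' = add_mset F K"
    by (meson multi_member_split union_iff)
  with box.hyps(4) have "\<Gamma> = K + boxes rs" by simp
  then show ?case by (intro sd_boxI[of rs]) (use box.hyps in auto)
qed (simp_all add: sd.conjR sd.disjR1 sd.disjR2 sd.impR)

lemma sd_conjL_inv: "sd (add_mset (Conj X Y) \<Gamma>) \<Delta> \<Longrightarrow> sd (add_mset X (add_mset Y \<Gamma>)) \<Delta>"
  using sd_left_inv[of "Conj X Y" \<Gamma> \<Delta> "{#X, Y#}"] by simp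

lemma sd_disjL_inv1: "sd (add_mset (Disj X Y) \<Gamma>) \<Delta> \<Longrightarrow> sd (add_mset X \<Gamma>) \<Delta>"
  using sd_left_inv[of "Disj X Y" \<Gamma> \<Delta> "{#X#}"] by simp

lemma sd_disjL_inv2: "sd (add_mset (Disj X Y) \<Gamma>) \<Delta> \<Longrightarrow> sd (add_mset Y \<Gamma>) \<Delta>"
  using sd_left_inv[of "Disj X Y" \<Gamma> \<Delta> "{#Y#}"] by simp

lemma sd_impL_inv: "sd (add_mset (Imp X Y) \<Gamma>) \<Delta> \<Longrightarrow> sd (add_mset Y \<Gamma>) \<Delta>"
  using sd_left_inv[of "Imp X Y" \<Gamma> \<Delta> "{#Y#}"] by simp

definition cut_admissible :: "'a fm \<Rightarrow> bool" where
  "cut_admissible A \<longleftrightarrow> (\<forall>\<Gamma> \<Delta>. sd \<Gamma> {#A#} \<longrightarrow> sd (add_mset A \<Gamma>) \<Delta> \<longrightarrow> sd \<Gamma> \<Delta>)"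

lemma cut_admissibleD: "cut_admissible A \<Longrightarrow> sd \<Gamma> {#A#} \<Longrightarrow> sd (add_mset A \<Gamma>) \<Delta> \<Longrightarrow> sd \<Gamma> \<Delta>"
  unfolding cut_admissible_def by blast

lemma sd_single_trans:
  "cut_admissible B \<Longrightarrow> sd {#A#} {#B#} \<Longrightarrow> sd {#B#} {#C#} \<Longrightarrow> sd {#A#} {#C#}"
  by (metis cut_admissibleD add_mset_commute sd_weaken add_mset_add_single)

lemma sd_cut_principal_disj:
  assumes "cut_admissible X" and "cut_admissible Y"
  shows "sd \<Gamma> {#Disj X Y#} \<Longrightarrow> sd (add_mset X \<Gamma>) \<Delta> \<Longrightarrow> sd (add_mset Y \<Gamma>) \<Delta> \<Longrightarrow> sd \<Gamma> \<Delta>"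
proof (induction \<Gamma> "{#Disj X Y#}" rule: sd.induct)
  case (botL \<Gamma>)
  show ?case using sd_succ_size[OF botL.prems(1)] by (rule sd.botL)
next
  case (conjL \<phi> \<psi> \<Gamma>)
  have inv: "sd (add_mset Z (add_mset \<phi> (add_mset \<psi> \<Gamma>))) \<Delta>"
    if "sd (add_mset Z (add_mset (Conj \<phi> \<psi>) \<Gamma>)) \<Delta>" for Z
    using sd_conjL_inv[of \<phi> \<psi> "add_mset Z \<Gamma>"] that by (simp add: add_mset_commute)
  have "sd (add_mset \<phi> (add_mset \<psi> \<Gamma>)) \<Delta>"
    using conjL.prems by (intro conjL.hyps(3) inv)
  then show ?case by (meson sd.conjL sd_succ_size)
next
  case (disjL \<phi> \<Gamma> \<psi>)
  have inv: "sd (add_mset Z (add_mset \<phi> \<Gamma>)) \<Delta>" "sd (add_mset Z (add_mset \<psi> \<Gamma>)) \<Delta>"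
    if "sd (add_mset Z (add_mset (Disj \<phi> \<psi>) \<Gamma>)) \<Delta>" for Z
    using sd_disjL_inv1[of \<phi> \<psi> "add_mset Z \<Gamma>"] sd_disjL_inv2[of \<phi> \<psi> "add_mset Z \<Gamma>"] that
    by (simp_all add: add_mset_commute)
  have "sd (add_mset \<phi> \<Gamma>) \<Delta>"
    using disjL.prems by (intro disjL.hyps(3) inv)
  moreover have "sd (add_mset \<psi> \<Gamma>) \<Delta>"
    using disjL.prems by (intro disjL.hyps(5) inv)
  ultimately show ?case by (meson sd.disjL sd_succ_size)
next
  case (impL \<phi> \<psi> \<Gamma>)
  have inv: "sd (add_mset Z (add_mset \<psi> \<Gamma>)) \<Delta>"
    if "sd (add_mset Z (add_mset (Imp \<phi> \<psi>) \<Gamma>)) \<Delta>" for Z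
    using sd_impL_inv[of \<phi> \<psi> "add_mset Z \<Gamma>"] that by (simp add: add_mset_commute)
  have "sd (add_mset \<psi> \<Gamma>) \<Delta>"
    using impL.prems by (intro impL.hyps(5) inv)
  then show ?case using impL.hyps(2) by (meson sd.impL sd_succ_size)
next
  case (disjR1 \<Gamma>)
  then show ?case using assms(1) by (blast intro: cut_admissibleD)
next
  case (disjR2 \<Gamma>)
  then show ?case using assms(2) by (blast intro: cut_admissibleD)
qed simp_all

lemma subset_add_mset_notin: "M \<subseteq># add_mset x N \<Longrightarrow> x \<notin># M \<Longrightarrow> M \<subseteq># N"
  by (metis add_mset_add_single diff_single_trivial subset_eq_diff_conv)

lemma subset_mset_add_msetI: "M \<subseteq># N \<Longrightarrow> M \<subseteq># add_mset x N"
  by (metis add_mset_add_single mset_subset_eq_add_left subset_mset.order_trans)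

text \<open>In the principal case for \<open>\<rho> \<box>\<rightarrow> \<sigma>\<close>, the remaining boxes \<open>rest\<close> of the right premise
  stay in the context, so when the left premise ends with a box rule its boxes are merged with them.\<close>
lemma sd_cut_principal_box:
  assumes "cut_admissible \<rho>" and "cut_admissible \<sigma>"
    and "sd_equiv \<phi> \<rho>"
    and rest: "\<forall>(a, b) \<in> set rest. sd_equiv \<phi> a"
    and seq: "sd (add_mset \<sigma> (mset (map snd rest))) {#\<psi>#}"
  shows "sd \<Gamma> {#Box \<rho> \<sigma>#} \<Longrightarrow> boxes rest \<subseteq># \<Gamma> \<Longrightarrow> sd \<Gamma> {#Box \<phi> \<psi>#}"
proof (induction \<Gamma> "{#Box \<rho> \<sigma>#}" rule: sd.induct)
  case (botL \<Gamma>)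
  show ?case by (simp add: sd.botL)
next
  case (conjL \<phi>' \<psi>' \<Gamma>)
  have "boxes rest \<subseteq># \<Gamma>"
    using conjL.prems by (rule subset_add_mset_notin) auto
  then have "boxes rest \<subseteq># add_mset \<phi>' (add_mset \<psi>' \<Gamma>)"
    by (intro subset_mset_add_msetI)
  then have "sd (add_mset \<phi>' (add_mset \<psi>' \<Gamma>)) {#Box \<phi> \<psi>#}"
    by (rule conjL.hyps(3))
  then show ?case by (rule sd.conjL[rotated]) simp
next
  case (disjL \<phi>' \<Gamma> \<psi>')
  have "boxes rest \<subseteq># \<Gamma>"
    using disjL.prems by (rule subset_add_mset_notin) auto
  then have "boxes rest \<subseteq># add_mset \<phi>' \<Gamma>" "boxes rest \<subseteq># add_mset \<psi>' \<Gamma>"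
    by (simp_all add: subset_mset_add_msetI)
  then have "sd (add_mset \<phi>' \<Gamma>) {#Box \<phi> \<psi>#}" "sd (add_mset \<psi>' \<Gamma>) {#Box \<phi> \<psi>#}"
    by (simp_all add: disjL.hyps(3,5))
  then show ?case by (simp add: sd.disjL)
next
  case (impL \<phi>' \<psi>' \<Gamma>)
  have "boxes rest \<subseteq># \<Gamma>"
    using impL.prems by (rule subset_add_mset_notin) auto
  then have "boxes rest \<subseteq># add_mset \<psi>' \<Gamma>"
    by (rule subset_mset_add_msetI)
  then have "sd (add_mset \<psi>' \<Gamma>) {#Box \<phi> \<psi>#}"
    by (rule impL.hyps(5))
  then show ?case using impL.hyps(2) by (simp add: sd.impL)
next
  case (box rs \<rho>' \<sigma>' \<Gamma>)
  have principal: "\<rho>' = \<rho>" "\<sigma>' = \<sigma>"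
    using box.hyps by simp_all
  obtain us where us: "mset us = mset rs \<union># mset rest"
    using ex_mset by blast
  have "boxes us = boxes rs \<union># boxes rest"
    using us by (simp add: union_mset_def image_mset_diff_if_inj inj_def)
  then have "boxes us \<subseteq># \<Gamma> + boxes rs"
    using box.prems by simp
  moreover have "\<forall>(a, b) \<in> set us. sd_equiv \<phi> a"
  proof clarify
    fix a b assume "(a, b) \<in> set us"
    then consider "(a, b) \<in> set rs" | "(a, b) \<in> set rest"
      using us by (metis Un_iff set_mset_mset set_mset_sup)
    then show "sd_equiv \<phi> a"
    proof cases
      case 1
      with box.hyps(1) principal have "sd {#\<rho>#} {#a#}" "sd {#a#} {#\<rho>#}"
        by auto
      then show ?thesis
        using sd_single_trans[OF assms(1)] assms(3) by blast
    qed (use rest in auto)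
  qed
  moreover have "sd (mset (map snd us)) {#\<psi>#}"
  proof (rule cut_admissibleD[OF assms(2)])
    show "sd (mset (map snd us)) {#\<sigma>#}"
      using box.hyps(2)[unfolded principal] by (rule sd_mono) (simp add: us image_mset_subseteq_mono)
    show "sd (add_mset \<sigma> (mset (map snd us))) {#\<psi>#}"
      using seq by (rule sd_mono) (simp add: us image_mset_subseteq_mono)
  qed
  ultimately show ?case by (rule sd_boxI)
qed simp_all

lemma sd_cut_principal_conj:
  assumes "cut_admissible \<phi>" and "cut_admissible \<psi>"
    and "sd \<Gamma> {#Conj \<phi> \<psi>#}" and "sd (add_mset \<phi> (add_mset \<psi> \<Gamma>)) \<Delta>"
  shows "sd \<Gamma> \<Delta>"
proof -
  have "sd \<Gamma> {#\<phi>#}" "sd \<Gamma> {#\<psi>#}"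
    using sd_conjR_inv[OF assms(3)] by simp_all
  moreover have "sd (add_mset \<psi> (add_mset \<phi> \<Gamma>)) \<Delta>"
    using assms(4) by (simp add: add_mset_commute)
  ultimately show ?thesis
    using assms(1,2) sd_weaken[of \<Gamma> "{#\<psi>#}" "{#\<phi>#}"] by (auto intro: cut_admissibleD)
qed

lemma sd_cut_principal_imp:
  assumes "cut_admissible \<phi>" and "cut_admissible \<psi>"
    and "sd \<Gamma> {#Imp \<phi> \<psi>#}" and "sd \<Gamma> {#\<phi>#}" and "sd (add_mset \<psi> \<Gamma>) \<Delta>"
  shows "sd \<Gamma> \<Delta>"
proof -
  have "sd \<Gamma> {#\<psi>#}"
    using assms(1,4) sd_impR_inv[OF assms(3)] by (rule cut_admissibleD)
  with assms(2,5) show ?thesis by (blast intro: cut_admissibleD)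
qed

lemma sd_cut_box_rule:
  fixes A :: "'a fm"
  assumes cut: "\<And>B :: 'a fm. size B < size A \<Longrightarrow> cut_admissible B"
    and prems: "\<forall>(\<rho>, \<sigma>) \<in> set rs. sd_equiv \<phi> \<rho>"
      "sd (mset (map snd rs)) {#\<psi>#}"
    and ctxt: "\<Gamma>' + boxes rs = add_mset A \<Gamma>" and "sd \<Gamma> {#A#}"
  shows "sd \<Gamma> {#Box \<phi> \<psi>#}"
proof (cases "A \<in># \<Gamma>'")
  case True
  then obtain K where "\<Gamma>' = add_mset A K" by (meson multi_member_split)
  with ctxt have "\<Gamma> = K + boxes rs" by simp
  then show ?thesis using sd.box[OF prems, of K] by simp
next
  case False
  with ctxt have "A \<in># boxes rs" by (metis union_iff union_single_eq_member add_mset_add_single)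
  then obtain \<rho> \<sigma> where principal: "(\<rho>, \<sigma>) \<in> set rs" "A = Box \<rho> \<sigma>" by auto
  define rest where "rest = remove1 (\<rho>, \<sigma>) rs"
  have rs: "mset rs = add_mset (\<rho>, \<sigma>) (mset rest)"
    unfolding rest_def using principal(1) by simp
  show ?thesis
  proof (rule sd_cut_principal_box)
    show "cut_admissible \<rho>" "cut_admissible \<sigma>"
      using cut[of \<rho>] cut[of \<sigma>] principal(2) by simp_all
    show "sd_equiv \<phi> \<rho>"
      using prems(1) principal(1) by auto
    show "\<forall>(a, b) \<in> set rest. sd_equiv \<phi> a"
      using prems(1) set_remove1_subset[of "(\<rho>, \<sigma>)" rs] unfolding rest_def by blast
    show "sd (add_mset \<sigma> (mset (map snd rest))) {#\<psi>#}"
      using prems(2) rs by simp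
    show "sd \<Gamma> {#Box \<rho> \<sigma>#}"
      using assms(5) principal(2) by simp
    have "\<Gamma> = \<Gamma>' + boxes rest"
      using ctxt rs principal(2) by simp
    then show "boxes rest \<subseteq># \<Gamma>" by simp
  qed
qed

lemma sd_cut_step:
  fixes A :: "'a fm"
  assumes cut: "\<And>B :: 'a fm. size B < size A \<Longrightarrow> cut_admissible B"
  shows "sd (add_mset A \<Gamma>) \<Delta> \<Longrightarrow> sd \<Gamma> {#A#} \<Longrightarrow> sd \<Gamma> \<Delta>"
proof (induction "add_mset A \<Gamma>" \<Delta> arbitrary: \<Gamma> rule: sd.induct)
  case (init p \<Gamma>')
  show ?case
  proof (cases "A = Atom p")
    case False
    then obtain K where "\<Gamma> = add_mset (Atom p) K"
      using add_mset_eq_add_msetD[OF init.hyps] by blast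
    then show ?thesis by (simp add: sd.init)
  qed (use init in simp)
next
  case (botL \<Delta> \<Gamma>')
  show ?case
  proof (cases "A = Bot")
    case True
    with botL.prems botL.hyps(1) show ?thesis by (simp add: sd_botR_inv)
  next
    case False
    then obtain K where "\<Gamma> = add_mset Bot K"
      using add_mset_eq_add_msetD[OF botL.hyps(2)] by blast
    with botL.hyps(1) show ?thesis by (simp add: sd.botL)
  qed
next
  case (conjL \<Delta> \<phi> \<psi> \<Gamma>')
  show ?case
  proof (cases "A = Conj \<phi> \<psi>")
    case True
    with conjL.hyps(2,4) conjL.prems show ?thesis
      using sd_cut_principal_conj[OF cut[of \<phi>] cut[of \<psi>]] by simp
  next
    case False
    then obtain K where K: "\<Gamma>' = add_mset A K" "\<Gamma> = add_mset (Conj \<phi> \<psi>) K"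
      using add_mset_eq_add_msetD[OF conjL.hyps(4)] by blast
    have "sd (add_mset \<phi> (add_mset \<psi> K)) \<Delta>"
      using conjL.hyps(3) conjL.prems K sd_conjL_inv[of \<phi> \<psi> K] by (simp add: add_mset_commute)
    with K(2) conjL.hyps(1) show ?thesis by (simp add: sd.conjL)
  qed
next
  case (disjL \<Delta> \<phi> \<Gamma>' \<psi>)
  show ?case
  proof (cases "A = Disj \<phi> \<psi>")
    case True
    with disjL.hyps(2,4,6) disjL.prems show ?thesis
      using sd_cut_principal_disj[OF cut[of \<phi>] cut[of \<psi>]] by simp
  next
    case False
    then obtain K where K: "\<Gamma>' = add_mset A K" "\<Gamma> = add_mset (Disj \<phi> \<psi>) K"
      using add_mset_eq_add_msetD[OF disjL.hyps(6)] by blast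
    have "sd (add_mset \<phi> K) \<Delta>" "sd (add_mset \<psi> K) \<Delta>"
      using disjL.hyps(3,5) disjL.prems K sd_disjL_inv1[of \<phi> \<psi> K] sd_disjL_inv2[of \<phi> \<psi> K]
      by (simp_all add: add_mset_commute)
    with K(2) disjL.hyps(1) show ?thesis by (simp add: sd.disjL)
  qed
next
  case (impR \<phi> \<psi>)
  have "sd (add_mset \<phi> \<Gamma>) {#\<psi>#}"
    using impR.hyps(2)[of "add_mset \<phi> \<Gamma>"] sd_weaken[OF impR.prems, of "{#\<phi>#}"]
    by (simp add: add_mset_commute)
  then show ?case by (rule sd.impR)
next
  case (impL \<Delta> \<phi> \<psi> \<Gamma>')
  have ant: "sd \<Gamma> {#\<phi>#}"
    using impL.hyps(3,6) impL.prems by simp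
  show ?case
  proof (cases "A = Imp \<phi> \<psi>")
    case True
    with impL.hyps(4,6) impL.prems show ?thesis
      using sd_cut_principal_imp[OF cut[of \<phi>] cut[of \<psi>] _ ant] by simp
  next
    case False
    then obtain K where K: "\<Gamma>' = add_mset A K" "\<Gamma> = add_mset (Imp \<phi> \<psi>) K"
      using add_mset_eq_add_msetD[OF impL.hyps(6)] by blast
    have "sd (add_mset \<psi> K) \<Delta>"
      using impL.hyps(5) impL.prems K sd_impL_inv[of \<phi> \<psi> K] by (simp add: add_mset_commute)
    with K(2) impL.hyps(1) ant show ?thesis by (simp add: sd.impL)
  qed
next
  case (box rs \<phi> \<psi> \<Gamma>')
  have "\<forall>(\<rho>, \<sigma>) \<in> set rs. sd_equiv \<phi> \<rho>"
    using box.hyps(1) by auto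
  from sd_cut_box_rule[OF cut this box.hyps(2) box.hyps(4) box.prems] show ?case .
qed (simp_all add: sd.conjR sd.disjR1 sd.disjR2)

theorem sd_cut: "sd \<Gamma> {#A#} \<Longrightarrow> sd (add_mset A \<Gamma>) \<Delta> \<Longrightarrow> sd \<Gamma> \<Delta>"
proof (induction A arbitrary: \<Gamma> \<Delta> rule: measure_induct_rule[of size])
  case (less A)
  have "cut_admissible B" if "size B < size A" for B :: "'a fm"
    using less.IH[OF that] unfolding cut_admissible_def by blast
  from sd_cut_step[OF this less.prems(2,1)] show ?case .
qed

lemma sd_mp: "Imp \<phi> \<psi> \<in># \<Gamma> \<Longrightarrow> \<phi> \<in># \<Gamma> \<Longrightarrow> sd (add_mset \<psi> \<Gamma>) \<Delta> \<Longrightarrow> sd \<Gamma> \<Delta>"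
proof -
  assume "Imp \<phi> \<psi> \<in># \<Gamma>" "\<phi> \<in># \<Gamma>" and cont: "sd (add_mset \<psi> \<Gamma>) \<Delta>"
  then obtain K where K: "\<Gamma> = add_mset (Imp \<phi> \<psi>) K"
    by (meson multi_member_split)
  have "sd \<Gamma> {#\<psi>#}"
    unfolding K by (rule sd.impL) (use \<open>\<phi> \<in># \<Gamma>\<close> K in \<open>simp_all add: sd_assm sd_refl\<close>)
  from this cont show "sd \<Gamma> \<Delta>" by (rule sd_cut)
qed

lemma sd_Iff_iff: "sd {#} {#Iff A B#} \<longleftrightarrow> sd_equiv A B"
proof
  assume "sd {#} {#Iff A B#}"
  then have "sd {#} {#Imp A B#}" "sd {#} {#Imp B A#}"
    using sd_conjR_inv unfolding Iff_def by blast+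
  from sd_impR_inv[OF this(1)] sd_impR_inv[OF this(2)] show "sd_equiv A B"
    by simp
next
  assume "sd_equiv A B"
  then show "sd {#} {#Iff A B#}"
    unfolding Iff_def by (intro sd.conjR sd.impR) simp_all
qed

lemma sd_box_single: "sd_equiv \<phi> \<rho> \<Longrightarrow> sd {#\<sigma>#} {#\<psi>#} \<Longrightarrow> sd {#Box \<rho> \<sigma>#} {#Box \<phi> \<psi>#}"
  by (rule sd_boxI[of "[(\<rho>, \<sigma>)]"]) simp_all

theorem sd_complete_hil: "hil A \<Longrightarrow> sd {#} {#A#}"
proof (induction rule: hil.induct)
  case (ax_K A B)
  show ?case by (intro sd.impR) (simp add: sd_assm)
next
  case (ax_S A B C)
  let ?G = "{#A, Imp A B, Imp A (Imp B C)#}"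
  have "sd (add_mset C (add_mset (Imp B C) (add_mset B ?G))) {#C#}"
    by (simp add: sd_assm)
  then have "sd (add_mset (Imp B C) (add_mset B ?G)) {#C#}"
    by (rule sd_mp[of B C, rotated 2]) simp_all
  then have "sd (add_mset B ?G) {#C#}"
    by (rule sd_mp[of A "Imp B C", rotated 2]) simp_all
  then have "sd ?G {#C#}"
    by (rule sd_mp[of A B, rotated 2]) simp_all
  then show ?case
    by (intro sd.impR) (simp add: add_mset_commute)
next
  case (ax_C1 A B)
  show ?case by (intro sd.impR sd.conjL) (simp_all add: sd_assm)
next
  case (ax_C2 A B)
  show ?case by (intro sd.impR sd.conjL) (simp_all add: sd_assm)
next
  case (ax_C3 A B)
  show ?case by (intro sd.impR sd.conjR) (simp_all add: sd_assm)
next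
  case (ax_D1 A B)
  show ?case by (intro sd.impR sd.disjR1) (simp add: sd_assm)
next
  case (ax_D2 B A)
  show ?case by (intro sd.impR sd.disjR2) (simp add: sd_assm)
next
  case (ax_D3 A C B)
  have "sd {#A, Imp B C, Imp A C#} {#C#}"
    by (rule sd_mp[of A C, rotated 2]) (simp_all add: sd_assm)
  moreover have "sd {#B, Imp B C, Imp A C#} {#C#}"
    by (rule sd_mp[of B C, rotated 2]) (simp_all add: sd_assm)
  ultimately show ?case
    by (intro sd.impR sd.disjL) (simp_all add: add_mset_commute)
next
  case (ax_EFQ A)
  show ?case by (intro sd.impR sd.botL) simp
next
  case (MP A B)
  have "sd (add_mset A {#}) {#B#}"
    using sd_impR_inv[OF MP.IH(1)] .
  with MP.IH(2) show ?case by (rule sd_cut)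
next
  case (RA \<phi> \<rho> \<psi>)
  then show ?case by (simp add: sd_Iff_iff sd_box_single sd_assm)
next
  case (RC \<psi> \<chi> \<phi>)
  then show ?case by (simp add: sd_Iff_iff sd_box_single sd_assm)
next
  case (CM \<phi> \<psi> \<chi>)
  have "sd {#Conj \<psi> \<chi>#} {#\<psi>#}" "sd {#Conj \<psi> \<chi>#} {#\<chi>#}"
    by (intro sd.conjL; simp add: sd_assm)+
  then show ?case
    by (intro sd.impR sd.conjR) (simp_all add: sd_box_single sd_assm)
next
  case (CC \<phi> \<psi> \<chi>)
  have "sd {#\<psi>, \<chi>#} {#Conj \<psi> \<chi>#}"
    by (intro sd.conjR) (simp_all add: sd_assm)
  then have "sd {#Box \<phi> \<psi>, Box \<phi> \<chi>#} {#Box \<phi> (Conj \<psi> \<chi>)#}"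
    by (intro sd_boxI[of "[(\<phi>, \<psi>), (\<phi>, \<chi>)]"]) (simp_all add: sd_assm)
  then show ?case by (intro sd.impR sd.conjL) simp_all
next
  case (CN \<phi>)
  show ?case
    by (rule sd_boxI[of "[]"]) (simp_all add: Top_def Neg_def sd.impR sd.botL)
qed

theorem sd_complete: "hil_from (set_mset \<Gamma>) A \<Longrightarrow> sd \<Gamma> {#A#}"
proof (induction rule: hil_from.induct)
  case (from_hil A)
  then show ?case using sd_weaken[OF sd_complete_hil, of A \<Gamma>] by simp
next
  case (from_mp A B)
  from sd_cut[OF from_mp.IH(2) sd_impR_inv[OF from_mp.IH(1)]] show ?case .
qed (simp add: sd_assm)

lemma sd_disj_mset:
  assumes "size \<Delta> \<le> 1" and "sd \<Gamma> {#disj_mset \<Delta>#}"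
  shows "sd \<Gamma> \<Delta>"
proof (cases "\<Delta> = {#}")
  case True
  with sd_botR_inv[OF assms(2)] show ?thesis by simp
next
  case False
  with assms(1) have "size \<Delta> = 1" by (simp add: le_Suc_eq)
  then obtain A where "\<Delta> = {#A#}" using size_1_singleton_mset by blast
  with assms(2) show ?thesis by simp
qed

theorem theorem7:
  fixes \<Gamma> \<Delta> :: "'a fm multiset"
  assumes "size \<Delta> \<le> 1"
  shows "sd \<Gamma> \<Delta> \<longleftrightarrow> hil (iota \<Gamma> \<Delta>)"
proof -
  have "sd \<Gamma> \<Delta> \<longleftrightarrow> hil_from (set_mset \<Gamma>) (disj_mset \<Delta>)"
    using sd_sound sd_complete sd_disj_mset assms by blast
  then show ?thesis by (simp add: hil_iota_iff)
qed

end
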